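(* Let $G$ be a finite simple graph with edge ideal $I=I(G)$, fix a total order $L_1>L_2>\dots>L_k$ on the minimal monomial generators (edges) of $I$, and for each $n\geq1$ let $L^{(n)}_1>L^{(n)}_2>\cdots$ be the minimal monomial generators of $I^n$ listed in the order described in the context. Then for every $n\geq1$, every $k'\geq 1$ and every $j\leq k'$: if $(L^{(n)}_j : L^{(n)}_{k'+1})$ is not contained in $(I^{n+1} : L^{(n)}_{k'+1})$, then there exists $i\leq k'$ such that $(L^{(n)}_i : L^{(n)}_{k'+1})$ is generated by a single variable and $(L^{(n)}_j : L^{(n)}_{k'+1})\subseteq (L^{(n)}_i : L^{(n)}_{k'+1})$.
   Context: $S=K[\,x : x\in V(G)\,]$ is the polynomial ring over a field $K$ on the vertices of $G$ and $I(G)=(xy : xy \text{ an edge of } G)$. For monomials $m,m'$, $(m:m')$ denotes the colon ideal $((m):(m'))$. Ordering: for $n\ge1$, every minimal monomial generator $M$ of $I^n$ can be written as $M=L_1^{a_1}\cdots L_k^{a_k}$ with $a_1+\dots+a_k=n$; its maximal expression is the lexicographically largest such exponent vector $(a_1,\dots,a_k)$ (lex: $(a)>_{\mathrm{lex}}(b)$ if at the first index where they differ, $a_i>b_i$). For minimal generators $M,N$ of $I^n$, $M>N$ iff the maximal expression of $M$ is lexicographically larger than that of $N$ (for $n=1$ this is the fixed order on the $L_i$). $L^{(n)}_1>L^{(n)}_2>\cdots$ is the list of all minimal monomial generators of $I^n$ in this decreasing order. *)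

theory Defs
  imports Main "HOL-Library.Multiset"
begin

text \<open>Monomials in the variables (elements of the vertex type) are multisets of variables
 (exponent vectors); the monomial u divides v iff u \<subseteq># v; product is +.
 A monomial ideal is represented by the set of monomials (over the vertex set V) it contains;
 containment of monomial ideals is containment of these sets.\<close>

definition monomials_over :: "'a set \<Rightarrow> 'a multiset set" where
  "monomials_over V = {u. set_mset u \<subseteq> V}"

definition simple_graph :: "'a set \<Rightarrow> 'a set set \<Rightarrow> bool" where
  "simple_graph V E \<longleftrightarrow> finite V \<and> (\<forall>e\<in>E. e \<subseteq> V \<and> card e = 2)"

definition edge_mono :: "'a set \<Rightarrow> 'a multiset" where
  "edge_mono e = mset_set e"

text \<open>Ls = [L_1, ..., L_k] is the fixed total order L_1 > ... > L_k of the edges.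
 The product L_1^{a_1} ... L_k^{a_k} for an exponent vector a.\<close>
definition expr_prod :: "'a set list \<Rightarrow> nat list \<Rightarrow> 'a multiset" where
  "expr_prod Ls a = sum_list (map2 (\<lambda>c e. repeat_mset c (edge_mono e)) a Ls)"

definition expressions :: "'a set list \<Rightarrow> nat \<Rightarrow> nat list set" where
  "expressions Ls n = {a. length a = length Ls \<and> sum_list a = n}"

text \<open>Products of n edges (monomial generators of I^n, not nec. minimal).\<close>
definition pow_prods :: "'a set list \<Rightarrow> nat \<Rightarrow> 'a multiset set" where
  "pow_prods Ls n = expr_prod Ls ` expressions Ls n"

definition min_gens :: "'a set list \<Rightarrow> nat \<Rightarrow> 'a multiset set" where
  "min_gens Ls n = {M \<in> pow_prods Ls n. \<forall>N\<in>pow_prods Ls n. N \<subseteq># M \<longrightarrow> N = M}"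

definition lex_gt :: "nat list \<Rightarrow> nat list \<Rightarrow> bool" where
  "lex_gt a b \<longleftrightarrow> length a = length b \<and>
     (\<exists>i < length a. take i a = take i b \<and> a ! i > b ! i)"

definition max_expr :: "'a set list \<Rightarrow> nat \<Rightarrow> 'a multiset \<Rightarrow> nat list" where
  "max_expr Ls n M = (THE a. a \<in> expressions Ls n \<and> expr_prod Ls a = M \<and>
      (\<forall>b \<in> expressions Ls n. expr_prod Ls b = M \<longrightarrow> b \<noteq> a \<longrightarrow> lex_gt a b))"

definition gen_gt :: "'a set list \<Rightarrow> nat \<Rightarrow> 'a multiset \<Rightarrow> 'a multiset \<Rightarrow> bool" where
  "gen_gt Ls n M N \<longleftrightarrow> lex_gt (max_expr Ls n M) (max_expr Ls n N)"

text \<open>The list L^{(n)}_1 > L^{(n)}_2 > ... (0-indexed in Isabelle).\<close>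
definition gens_list :: "'a set list \<Rightarrow> nat \<Rightarrow> 'a multiset list" where
  "gens_list Ls n = (THE xs. distinct xs \<and> set xs = min_gens Ls n \<and> sorted_wrt (gen_gt Ls n) xs)"

abbreviation Lgen :: "'a set list \<Rightarrow> nat \<Rightarrow> nat \<Rightarrow> 'a multiset" where
  "Lgen Ls n j \<equiv> gens_list Ls n ! (j - 1)"

definition mideal :: "'a set \<Rightarrow> 'a multiset set \<Rightarrow> 'a multiset set" where
  "mideal V S = {u \<in> monomials_over V. \<exists>g\<in>S. g \<subseteq># u}"

definition mono_colon :: "'a set \<Rightarrow> 'a multiset \<Rightarrow> 'a multiset \<Rightarrow> 'a multiset set" where
  "mono_colon V m m' = {u \<in> monomials_over V. m \<subseteq># u + m'}"

definition ideal_colon :: "'a set \<Rightarrow> 'a multiset set \<Rightarrow> 'a multiset \<Rightarrow> 'a multiset set" where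
  "ideal_colon V J m' = {u \<in> monomials_over V. u + m' \<in> J}"

definition edge_ideal_pow :: "'a set \<Rightarrow> 'a set list \<Rightarrow> nat \<Rightarrow> 'a multiset set" where
  "edge_ideal_pow V Ls n = mideal V (pow_prods Ls n)"

end

theory Submission
  imports Defs "HOL-Library.List_Lexorder"
begin

text \<open>
  Write \<open>N = L\<^sub>j\<close> and \<open>M = L\<^sub>k\<^sub>'\<^sub>+\<^sub>1\<close> through their maximal expressions, i.e. as multisets
  \<open>A\<close> and \<open>B\<close> of edges, and cancel the edges they share. An exchange argument on the remaining
  edges swaps some edges \<open>B1\<close> of \<open>M\<close> for edges \<open>A1\<close> of \<open>N\<close> such that the new product
  \<open>C = M B1\<^sup>-\<^sup>1 A1\<close> exceeds \<open>M\<close> only by a divisor of \<open>N / gcd(N, M)\<close>. If \<open>C\<close> has more than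
  \<open>n\<close> edges, a product of \<open>n + 1\<close> edges divides \<open>(N / gcd(N, M)) M\<close>, so
  \<open>(N : M) \<subseteq> (I\<^sup>n\<^sup>+\<^sup>1 : M)\<close>. Otherwise \<open>C\<close> is a generator of \<open>I\<^sup>n\<close>: the exchange only touches
  edges from the first index at which the maximal expressions of \<open>N\<close> and \<open>M\<close> differ on, and
  adds that edge, so \<open>C\<close> has a lexicographically larger expression and precedes \<open>M\<close>. Finally
  \<open>C / gcd(C, M)\<close> is a single variable \<open>x\<close> dividing \<open>N / gcd(N, M)\<close>, whence
  \<open>(N : M) \<subseteq> (C : M) = (x)\<close>.
\<close>

lemma size_diff_swap:
  fixes X Y :: "'a multiset"
  assumes "size X = size Y"
  shows "size (X - Y) = size (Y - X)"
proof -
  have "X + (Y - X) = Y + (X - Y)"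
    by (simp add: multiset_eq_iff; linarith)
  then show ?thesis
    using assms by (metis size_union add_left_cancel)
qed

lemma two_le_size_diff_cases:
  fixes X Y :: "'a multiset"
  assumes "2 \<le> size (Y - X)"
  shows "count X c + 2 \<le> count Y c \<or> (\<exists>d. d \<noteq> c \<and> count X d < count Y d)"
proof (rule ccontr)
  assume "\<not> ?thesis"
  then have "Y - X \<subseteq># {#c#}"
    by (intro mset_subset_eqI) (auto simp: not_less)
  then show False
    using assms size_mset_mono[of "Y - X" "{#c#}"] by simp
qed

lemma diff_eq_single_mset:
  fixes X Y :: "'a multiset"
  assumes "size X = size Y" "X \<noteq> Y" "size (X - Y) \<le> 1"
  obtains x where "X - Y = {#x#}"
proof -
  have "X - Y \<noteq> {#}"
  proof
    assume "X - Y = {#}"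
    moreover have "Y - X = {#}"
      using size_diff_swap[OF assms(1)] \<open>X - Y = {#}\<close> by simp
    ultimately show False
      using assms(2) by (simp add: Diff_eq_empty_iff_mset subset_mset.antisym)
  qed
  then have "size (X - Y) = 1"
    using assms(3) by (cases "size (X - Y)") auto
  then obtain x where "X - Y = {#x#}"
    using size_1_singleton_mset by blast
  then show thesis
    by (rule that)
qed

lemma submset_of_size:
  assumes "m \<le> size C"
  obtains C' where "C' \<subseteq># C" "size C' = m"
proof -
  obtain xs where xs: "mset xs = C" using ex_mset by blast
  have "mset (take m xs) \<subseteq># C"
    by (metis xs append_take_drop_id mset_append mset_subset_eq_add_left)
  moreover have "size (mset (take m xs)) = m" using assms xs by auto
  ultimately show ?thesis using that by blast
qed

lemma list_less_nthI:
  assumes "length a = length b" "i < length a" "\<forall>j<i. a ! j = b ! j" "a ! i < b ! i"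
  shows "a < b"
proof -
  have "take i a = take i b"
    using assms(1-3) by (simp add: list_eq_iff_nth_eq)
  then show ?thesis
    using assms by (auto simp: list_less_def lexord_take_index_conv)
qed

lemma sorted_wrt_key_ex1:
  fixes g :: "'a \<Rightarrow> 'b::linorder"
  assumes "finite S" "inj_on g S"
  shows "\<exists>!xs. distinct xs \<and> set xs = S \<and> sorted_wrt (\<lambda>x y. g y < g x) xs"
proof (rule ex_ex1I)
  let ?xs = "map (the_inv_into S g) (rev (sorted_list_of_set (g ` S)))"
  have map_g: "map g ?xs = rev (sorted_list_of_set (g ` S))"
    using assms by (auto intro!: map_idI simp: f_the_inv_into_f)
  have "set ?xs = S"
    using assms by (simp add: the_inv_into_f_f image_comp)
  moreover have "sorted_wrt (\<lambda>x y. g y < g x) ?xs"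
    using map_g sorted_wrt_map[of "\<lambda>x y. y < x" g ?xs] by (simp add: sorted_wrt_rev)
  moreover have "distinct ?xs"
    using map_g by (metis distinct_map distinct_rev distinct_sorted_list_of_set)
  ultimately show "\<exists>xs. distinct xs \<and> set xs = S \<and> sorted_wrt (\<lambda>x y. g y < g x) xs"
    by blast
next
  fix xs ys
  assume xs: "distinct xs \<and> set xs = S \<and> sorted_wrt (\<lambda>x y. g y < g x) xs"
    and ys: "distinct ys \<and> set ys = S \<and> sorted_wrt (\<lambda>x y. g y < g x) ys"
  have "sorted_wrt (<) (rev (map g xs))" "sorted_wrt (<) (rev (map g ys))"
    using xs ys by (simp_all add: sorted_wrt_rev sorted_wrt_map)
  moreover have "set (rev (map g ys)) = set (rev (map g xs))"
    using xs ys by simp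
  ultimately have "rev (map g ys) = rev (map g xs)"
    by (rule strict_sorted_equal)
  moreover have "inj_on g (set ys \<union> set xs)"
    using xs ys assms(2) by simp
  ultimately show "xs = ys"
    using inj_on_map_eq_map by fastforce
qed

lemma sorted_wrt_index_less:
  assumes "sorted_wrt R xs" "\<And>x y. R x y \<Longrightarrow> \<not> R y x"
    and "i < length xs" "j < length xs" "R (xs ! i) (xs ! j)"
  shows "i < j"
proof (rule ccontr)
  assume "\<not> i < j"
  then consider "j < i" | "i = j"
    by linarith
  then show False
    using assms sorted_wrt_nth_less[OF assms(1)] by cases blast+
qed

section \<open>Products of edges\<close>

lemma card_2_obtain:
  assumes "card S = 2" "c \<in> S"
  obtains a where "S = {a, c}" "a \<noteq> c"
proof -
  obtain x y where "S = {x, y}" "x \<noteq> y"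
    using card_2_iff[THEN iffD1, OF assms(1)] by blast
  then show thesis
    using assms(2) that[of x] that[of y] by (auto simp: insert_commute)
qed

definition edges_prod :: "('i \<Rightarrow> 'a set) \<Rightarrow> 'i multiset \<Rightarrow> 'a multiset" where
  "edges_prod f C = (\<Sum>i\<in>#C. mset_set (f i))"

lemma edges_prod_empty [simp]: "edges_prod f {#} = {#}"
  by (simp add: edges_prod_def)

lemma edges_prod_add_mset [simp]: "edges_prod f (add_mset i C) = mset_set (f i) + edges_prod f C"
  by (simp add: edges_prod_def)

lemma edges_prod_union [simp]: "edges_prod f (C + D) = edges_prod f C + edges_prod f D"
  by (simp add: edges_prod_def)

lemma edges_prod_mono: "C \<subseteq># D \<Longrightarrow> edges_prod f C \<subseteq># edges_prod f D"
  by (metis mset_subset_eq_exists_conv edges_prod_union)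

lemma edges_prod_diff: "C \<subseteq># D \<Longrightarrow> edges_prod f (D - C) = edges_prod f D - edges_prod f C"
  by (metis add_diff_cancel_left' mset_subset_eq_exists_conv edges_prod_union)

lemma edges_prod_diff_cancel:
  "edges_prod f A - edges_prod f B = edges_prod f (A - B) - edges_prod f (B - A)"
proof -
  have "A = (A - (A - B)) + (A - B)" by (simp add: multiset_eq_iff)
  moreover have "B = (A - (A - B)) + (B - A)" by (simp add: multiset_eq_iff; linarith)
  ultimately show ?thesis
    by (metis edges_prod_union add_diff_cancel_left)
qed

lemma count_edges_prod:
  "\<forall>i\<in>#C. finite (f i) \<Longrightarrow> count (edges_prod f C) v = size {#i \<in># C. v \<in> f i#}"
  by (induction C) (auto simp: count_mset_set')

lemma size_edges_prod: "\<forall>i\<in>#C. card (f i) = 2 \<Longrightarrow> size (edges_prod f C) = 2 * size C"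
  by (induction C) auto

lemma set_edges_prod: "set_mset (edges_prod f C) \<subseteq> \<Union> (f ` set_mset C)"
proof (induction C)
  case (add i C)
  have "set_mset (mset_set (f i)) \<subseteq> f i" by (cases "finite (f i)") auto
  with add show ?case by auto
qed simp

lemma count_edges_prod_pos:
  assumes "\<beta> \<in># B" "v \<in> f \<beta>" "finite (f \<beta>)"
  shows "0 < count (edges_prod f B) v"
  using mset_subset_eq_count[OF edges_prod_mono[of "{#\<beta>#}" B f], of v] assms
  by (simp add: count_mset_set')

lemma count_edges_prod_ge_2:
  assumes "{#\<beta>, \<beta>#} \<subseteq># B" "v \<in> f \<beta>" "finite (f \<beta>)"
  shows "2 \<le> count (edges_prod f B) v"
  using mset_subset_eq_count[OF edges_prod_mono[OF assms(1), of f], of v] assms(2,3)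
  by (simp add: count_mset_set')

lemma count_edges_prod_pos_obtain:
  assumes "0 < count (edges_prod f B) v"
  obtains \<beta> where "\<beta> \<in># B" "v \<in> f \<beta>"
proof -
  have "v \<in> \<Union> (f ` set_mset B)"
    using assms set_edges_prod[of f B] by auto
  then show thesis using that by blast
qed

section \<open>The exchange lemma\<close>

abbreviation deficient :: "('i \<Rightarrow> 'a set) \<Rightarrow> 'i multiset \<Rightarrow> 'i multiset \<Rightarrow> 'a \<Rightarrow> bool" where
  "deficient f A B v \<equiv> count (edges_prod f A) v < count (edges_prod f B) v"

lemma deficient_edge_obtain:
  assumes "edges_prod f B - edges_prod f A \<noteq> {#}"
  obtains c \<beta> where "deficient f A B c" "\<beta> \<in># B" "c \<in> f \<beta>"
proof -
  obtain c where "c \<in># edges_prod f B - edges_prod f A"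
    using assms by (rule multiset_nonemptyE)
  then have c: "deficient f A B c"
    by (simp add: in_diff_count)
  then have "0 < count (edges_prod f B) c"
    by linarith
  then obtain \<beta> where "\<beta> \<in># B" "c \<in> f \<beta>"
    by (rule count_edges_prod_pos_obtain)
  with c show thesis
    by (rule that)
qed

text \<open>
  Read \<open>A\<close> and \<open>B\<close> as the edges of \<open>N\<close> and \<open>M\<close>.
\<close>

definition improving_exchange ::
    "('i \<Rightarrow> 'a set) \<Rightarrow> 'i \<Rightarrow> 'i multiset \<Rightarrow> 'i multiset \<Rightarrow> 'i multiset \<Rightarrow> 'i multiset \<Rightarrow> bool" where
  "improving_exchange f e A B A1 B1 \<longleftrightarrow> A1 \<subseteq># A \<and> B1 \<subseteq># B \<and>
     edges_prod f A1 - edges_prod f B1 \<subseteq># edges_prod f A - edges_prod f B \<and>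
     (size B1 < size A1 \<or>
      size A1 = size B1 \<and> e \<in># A1 \<and> size (edges_prod f A1 - edges_prod f B1) \<le> 1)"

lemma improving_exchange_single:
  assumes "e \<in># A" "\<beta> \<in># B"
    and "mset_set (f e) - mset_set (f \<beta>) \<subseteq># edges_prod f A - edges_prod f B"
    and "size (mset_set (f e) - mset_set (f \<beta>)) \<le> 1"
  shows "improving_exchange f e A B {#e#} {#\<beta>#}"
  using assms by (simp add: improving_exchange_def)

lemma improving_exchange_drop_deficient:
  assumes "size A = size B" "\<beta> \<in># B" "finite (f \<beta>)" "\<forall>v\<in>f \<beta>. deficient f A B v"
  shows "improving_exchange f e A B A (B - {#\<beta>#})"
proof -
  have "edges_prod f A - edges_prod f (B - {#\<beta>#}) \<subseteq># edges_prod f A - edges_prod f B"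
  proof (rule mset_subset_eqI)
    fix w
    show "count (edges_prod f A - edges_prod f (B - {#\<beta>#})) w \<le> count (edges_prod f A - edges_prod f B) w"
      using assms(2,3) assms(4)[rule_format, of w] by (auto simp: edges_prod_diff count_mset_set')
  qed
  moreover have "size (B - {#\<beta>#}) < size A"
    using assms(1,2) by (simp add: size_Diff1_less)
  ultimately show ?thesis
    by (simp add: improving_exchange_def)
qed

lemma improving_exchange_shrink:
  assumes "\<alpha> \<in># A" "\<beta> \<in># B" "finite (f \<alpha>)" "finite (f \<beta>)" "v \<in> f \<alpha>" "v \<in> f \<beta>"
    and "\<forall>w\<in>f \<beta>. w \<noteq> v \<longrightarrow> deficient f A B w"
    and "improving_exchange f e (A - {#\<alpha>#}) (B - {#\<beta>#}) A1 B1"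
  shows "improving_exchange f e A B A1 B1"
proof -
  have v: "0 < count (edges_prod f B) v"
    using assms(2,6,4) by (rule count_edges_prod_pos)
  have "edges_prod f (A - {#\<alpha>#}) - edges_prod f (B - {#\<beta>#})
      \<subseteq># edges_prod f A - edges_prod f B"
  proof (rule mset_subset_eqI)
    fix w
    show "count (edges_prod f (A - {#\<alpha>#}) - edges_prod f (B - {#\<beta>#})) w
        \<le> count (edges_prod f A - edges_prod f B) w"
      using assms(1-6) assms(7)[rule_format, of w] v
      by (cases "w = v") (auto simp: edges_prod_diff count_mset_set')
  qed
  with assms(8) show ?thesis
    unfolding improving_exchange_def by (meson diff_subset_eq_self subset_mset.order_trans)
qed

lemma improving_exchange_two_deficient:
  assumes sz: "size A = size B" and B2: "{#\<beta>, \<beta>'#} \<subseteq># B" and e: "e \<in># A"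
    and edges: "f e = {a, y}" "f \<beta> = {a, c}" "f \<beta>' = {c', y}"
    and distinct: "a \<noteq> y" "a \<noteq> c" "a \<noteq> c'" "c \<noteq> y" "c' \<noteq> y"
    and deficient: "deficient f A B c" "deficient f A B c'"
    and double: "c = c' \<Longrightarrow> count (edges_prod f A) c + 2 \<le> count (edges_prod f B) c"
  shows "improving_exchange f e A B (A - {#e#}) (B - {#\<beta>, \<beta>'#})"
proof -
  have "\<beta> \<in># B" "\<beta>' \<in># B"
    using B2 by (auto dest: mset_subset_eqD)
  then have pos: "0 < count (edges_prod f B) a" "0 < count (edges_prod f B) y"
    using count_edges_prod_pos[of _ B _ f] edges(2,3) by simp_all
  have "edges_prod f (A - {#e#}) - edges_prod f (B - {#\<beta>, \<beta>'#})
      \<subseteq># edges_prod f A - edges_prod f B"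
  proof (rule mset_subset_eqI)
    fix w
    show "count (edges_prod f (A - {#e#}) - edges_prod f (B - {#\<beta>, \<beta>'#})) w
        \<le> count (edges_prod f A - edges_prod f B) w"
      using pos B2 e edges distinct deficient double
      by (cases "w = a"; cases "w = y"; cases "w = c"; cases "w = c'")
        (simp_all add: edges_prod_diff count_mset_set')
  qed
  moreover have "size (B - {#\<beta>, \<beta>'#}) < size (A - {#e#})"
    using sz e B2 size_mset_mono[OF B2] by (simp add: size_Diff_submset size_Diff_singleton)
  ultimately show ?thesis
    using e B2 by (simp add: improving_exchange_def)
qed

text \<open>
  The configuration in which neither induction step of \<open>improving_exchange_exists\<close> applies.
  Then every edge of \<open>B\<close> through a deficient vertex \<open>c\<close> is \<open>{a, c}\<close> with \<open>a \<in> e\<close> covered exactly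
  once by \<open>A\<close> and by \<open>B\<close>; so at most two edges of \<open>B\<close> meet deficient vertices, and the exchange
  can be written down explicitly.
\<close>

context
  fixes f :: "'i \<Rightarrow> 'a set" and e :: 'i and A B :: "'i multiset"
  assumes two_elem: "\<forall>i\<in>#A + B. card (f i) = 2"
    and e_in_A: "e \<in># A"
    and no_deficient_edge: "\<forall>\<beta>\<in>#B. \<exists>v\<in>f \<beta>. \<not> deficient f A B v"
    and no_pivot: "\<forall>\<alpha>\<in>#A - {#e#}. \<forall>\<beta>\<in>#B. \<forall>v\<in>f \<alpha> \<inter> f \<beta>. \<exists>w\<in>f \<beta>. w \<noteq> v \<and> \<not> deficient f A B w"
begin

lemma stuck_finite: "i \<in># A + B \<Longrightarrow> finite (f i)"
  using two_elem by (intro card_ge_0_finite) auto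

lemma stuck_unique_edge:
  assumes "count (edges_prod f B) v = 1" "\<beta>1 \<in># B" "v \<in> f \<beta>1" "\<beta>2 \<in># B" "v \<in> f \<beta>2"
  shows "\<beta>1 = \<beta>2"
proof -
  have "size {#i \<in># B. v \<in> f i#} = 1"
    using assms(1) count_edges_prod[of B f v] stuck_finite by auto
  then obtain i where "{#i \<in># B. v \<in> f i#} = {#i#}"
    using size_1_singleton_mset by blast
  moreover have "\<beta>1 \<in># {#i \<in># B. v \<in> f i#}" "\<beta>2 \<in># {#i \<in># B. v \<in> f i#}"
    using assms(2-5) by simp_all
  ultimately show ?thesis by simp
qed

lemma stuck_deficient_partner:
  assumes c: "deficient f A B c" and \<beta>: "\<beta> \<in># B" "c \<in> f \<beta>"
  obtains a where "f \<beta> = {a, c}" "a \<noteq> c" "a \<in> f e"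
    "count (edges_prod f A) a = 1" "count (edges_prod f B) a = 1"
proof -
  have "card (f \<beta>) = 2"
    using two_elem \<beta>(1) by simp
  then obtain a where a: "f \<beta> = {a, c}" "a \<noteq> c"
    using \<beta>(2) by (rule card_2_obtain)
  have "\<exists>v\<in>f \<beta>. \<not> deficient f A B v"
    using no_deficient_edge \<beta>(1) by blast
  then have a_ok: "\<not> deficient f A B a"
    using a(1) c by auto
  obtain A' where A': "A = add_mset e A'"
    using e_in_A by (metis insert_DiffM)
  have "a \<notin> f \<alpha>" if "\<alpha> \<in># A'" for \<alpha>
  proof
    assume "a \<in> f \<alpha>"
    moreover have "\<alpha> \<in># A - {#e#}" using that A' by simp
    ultimately obtain w where "w \<in> f \<beta>" "w \<noteq> a" "\<not> deficient f A B w"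
      using no_pivot[rule_format, of \<alpha> \<beta> a] \<beta>(1) a(1) by auto
    then show False using a c by auto
  qed
  then have "{#i \<in># A'. a \<in> f i#} = {#}"
    by (simp add: filter_mset_eq_conv)
  then have cnt_A: "count (edges_prod f A) a = (if a \<in> f e then 1 else 0)"
    using count_edges_prod[of A f a] stuck_finite A' by simp
  have "finite (f \<beta>)"
    using stuck_finite \<beta>(1) by simp
  then have pos: "0 < count (edges_prod f B) a"
    using count_edges_prod_pos[OF \<beta>(1), of a f] a(1) by simp
  have "a \<in> f e"
  proof (rule ccontr)
    assume "a \<notin> f e"
    then show False using cnt_A pos a_ok by simp
  qed
  then have cnt_A1: "count (edges_prod f A) a = 1"
    using cnt_A by simp
  moreover have "count (edges_prod f B) a = 1"
    using cnt_A1 pos a_ok by linarith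
  ultimately show thesis
    using a \<open>a \<in> f e\<close> that by simp
qed

lemma stuck_deficient_edge_cases:
  assumes \<beta>: "\<beta> \<in># B" "f \<beta> = {a, c}" "count (edges_prod f B) a = 1"
    and e: "f e = {a, y}" and \<beta>': "\<beta>' \<in># B" "y \<in> f \<beta>'"
    and d: "deficient f A B d" "\<gamma> \<in># B" "d \<in> f \<gamma>"
  shows "\<gamma> = \<beta> \<or> \<gamma> = \<beta>'"
proof -
  obtain p where p: "f \<gamma> = {p, d}" "p \<noteq> d" "p \<in> f e"
      "count (edges_prod f A) p = 1" "count (edges_prod f B) p = 1"
    by (rule stuck_deficient_partner[OF d])
  show ?thesis
  proof (cases "p = a")
    case True
    then show ?thesis
      using stuck_unique_edge[OF p(5) d(2) _ \<beta>(1)] p(1) \<beta>(2) by simp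
  next
    case False
    then have "p = y"
      using p(3) e by simp
    then show ?thesis
      using stuck_unique_edge[OF p(5) d(2) _ \<beta>'(1)] p(1) \<beta>'(2) by simp
  qed
qed

lemma stuck_second_deficient:
  assumes deficit: "2 \<le> size (edges_prod f B - edges_prod f A)"
    and \<beta>: "\<beta> \<in># B" "f \<beta> = {a, c}" "deficient f A B c" "count (edges_prod f B) a = 1"
    and e: "f e = {a, y}"
    and \<beta>': "\<beta>' \<in># B" "f \<beta>' = {c', y}" "c' \<noteq> y" "a \<notin> f \<beta>'"
    and y: "\<not> deficient f A B y"
  shows "deficient f A B c' \<and> (c = c' \<longrightarrow> count (edges_prod f A) c + 2 \<le> count (edges_prod f B) c)"
proof -
  have on_\<beta>\<beta>': "\<gamma> = \<beta> \<or> \<gamma> = \<beta>'" if "deficient f A B d" "\<gamma> \<in># B" "d \<in> f \<gamma>" for d \<gamma>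
    using stuck_deficient_edge_cases[OF \<beta>(1,2,4) e \<beta>'(1) _ that] \<beta>'(2) by simp
  have "0 < count (edges_prod f A) a"
    using count_edges_prod_pos[OF e_in_A, of a f] e stuck_finite e_in_A by simp
  then have a_ok: "\<not> deficient f A B a"
    using \<beta>(4) by simp
  have "c \<noteq> y"
    using \<beta>(3) y by blast
  consider (double) "count (edges_prod f A) c + 2 \<le> count (edges_prod f B) c"
    | (other) d where "d \<noteq> c" "deficient f A B d"
    using two_le_size_diff_cases[OF deficit] by blast
  then show ?thesis
  proof cases
    case double
    have "finite (f \<beta>)"
      using stuck_finite \<beta>(1) by simp
    then have "0 < count (edges_prod f (B - {#\<beta>#})) c"
      using double \<beta>(1,2) by (simp add: edges_prod_diff)
    then obtain \<gamma> where \<gamma>: "\<gamma> \<in># B - {#\<beta>#}" "c \<in> f \<gamma>"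
      by (rule count_edges_prod_pos_obtain)
    have "\<gamma> \<noteq> \<beta>"
    proof
      assume "\<gamma> = \<beta>"
      then have "{#\<beta>, \<beta>#} \<subseteq># B"
        using \<gamma>(1) \<beta>(1) by (simp add: insert_subset_eq_iff)
      then show False
        using count_edges_prod_ge_2[of \<beta> B a f] \<open>finite (f \<beta>)\<close> \<beta>(2,4) by simp
    qed
    then have "\<gamma> = \<beta>'"
      using on_\<beta>\<beta>'[OF \<beta>(3) in_diffD[OF \<gamma>(1)] \<gamma>(2)] by simp
    then have "c = c'"
      using \<gamma>(2) \<beta>'(2) \<open>c \<noteq> y\<close> by simp
    then show ?thesis
      using double \<beta>(3) by simp
  next
    case (other d)
    have "0 < count (edges_prod f B) d"
      using other(2) by linarith
    then obtain \<gamma> where \<gamma>: "\<gamma> \<in># B" "d \<in> f \<gamma>"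
      by (rule count_edges_prod_pos_obtain)
    have "\<gamma> \<noteq> \<beta>"
      using \<gamma>(2) \<beta>(2) other a_ok by auto
    then have "\<gamma> = \<beta>'"
      using on_\<beta>\<beta>'[OF other(2) \<gamma>] by simp
    then have "d = c'"
      using \<gamma>(2) \<beta>'(2) other(2) y by auto
    then show ?thesis
      using other by simp
  qed
qed

lemma stuck_partner_not_deficient:
  assumes \<beta>: "\<beta> \<in># B" "f \<beta> = {a, c}" "count (edges_prod f B) a = 1"
    and e: "f e = {a, y}" "y \<noteq> a" "y \<noteq> c"
  shows "\<not> deficient f A B y"
proof
  assume y: "deficient f A B y"
  then have "0 < count (edges_prod f B) y"
    by linarith
  then obtain \<gamma> where \<gamma>: "\<gamma> \<in># B" "y \<in> f \<gamma>"
    by (rule count_edges_prod_pos_obtain)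
  obtain p where p: "f \<gamma> = {p, y}" "p \<noteq> y" "p \<in> f e"
      "count (edges_prod f A) p = 1" "count (edges_prod f B) p = 1"
    by (rule stuck_deficient_partner[OF y \<gamma>])
  have "p = a"
    using p(2,3) e(1) by simp
  then have "\<gamma> = \<beta>"
    using stuck_unique_edge[OF \<beta>(3) \<gamma>(1) _ \<beta>(1)] p(1) \<beta>(2) by simp
  then show False
    using \<gamma>(2) \<beta>(2) e(2,3) by simp
qed

lemma stuck_balanced_exchange:
  assumes sz: "size A = size B" and deficit: "2 \<le> size (edges_prod f B - edges_prod f A)"
    and \<beta>: "\<beta> \<in># B" "f \<beta> = {a, c}" "a \<noteq> c" "deficient f A B c" "count (edges_prod f B) a = 1"
    and e: "f e = {a, y}" "y \<noteq> a" "c \<noteq> y"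
    and balanced: "count (edges_prod f A) y = count (edges_prod f B) y"
  shows "\<exists>A1 B1. improving_exchange f e A B A1 B1"
proof -
  have "0 < count (edges_prod f A) y"
    using count_edges_prod_pos[OF e_in_A, of y f] e(1) stuck_finite e_in_A by simp
  then have "0 < count (edges_prod f B) y"
    using balanced by simp
  then obtain \<beta>' where \<beta>': "\<beta>' \<in># B" "y \<in> f \<beta>'"
    by (rule count_edges_prod_pos_obtain)
  have "card (f \<beta>') = 2"
    using two_elem \<beta>'(1) by simp
  then obtain c' where c': "f \<beta>' = {c', y}" "c' \<noteq> y"
    using \<beta>'(2) by (rule card_2_obtain)
  have a_\<beta>': "a \<notin> f \<beta>'"
  proof
    assume "a \<in> f \<beta>'"
    then have "\<beta>' = \<beta>"
      using stuck_unique_edge[OF \<beta>(5) \<beta>'(1) _ \<beta>(1)] \<beta>(2) by simp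
    then show False
      using \<beta>'(2) \<beta>(2) e(2,3) by simp
  qed
  have "\<not> deficient f A B y"
    using balanced by simp
  then have c'_deficient: "deficient f A B c'"
    and double: "c = c' \<Longrightarrow> count (edges_prod f A) c + 2 \<le> count (edges_prod f B) c"
    using stuck_second_deficient[OF deficit \<beta>(1,2,4,5) e(1) \<beta>'(1) c' a_\<beta>'] by simp_all
  have "\<beta>' \<noteq> \<beta>"
    using a_\<beta>' \<beta>(2) by auto
  then have "{#\<beta>, \<beta>'#} \<subseteq># B"
    using \<beta>(1) \<beta>'(1) by (simp add: insert_subset_eq_iff in_diff_count)
  moreover have "a \<noteq> y" "a \<noteq> c'"
    using e(2) a_\<beta>' c'(1) by auto
  ultimately have "improving_exchange f e A B (A - {#e#}) (B - {#\<beta>, \<beta>'#})"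
    using improving_exchange_two_deficient[OF sz _ e_in_A e(1) \<beta>(2) c'(1) _ \<beta>(3) _ e(3)
        c'(2) \<beta>(4) c'_deficient double] by blast
  then show ?thesis
    by blast
qed
lemma stuck_improving_exchange:
  assumes sz: "size A = size B" and big: "\<not> size (edges_prod f A - edges_prod f B) \<le> 1"
  shows "\<exists>A1 B1. improving_exchange f e A B A1 B1"
proof -
  have "size (edges_prod f A) = size (edges_prod f B)"
    using size_edges_prod[of A f] size_edges_prod[of B f] two_elem sz by simp
  then have deficit: "2 \<le> size (edges_prod f B - edges_prod f A)"
    using size_diff_swap big by fastforce
  then have "edges_prod f B - edges_prod f A \<noteq> {#}"
    by auto
  then obtain c \<beta> where c: "deficient f A B c" and \<beta>: "\<beta> \<in># B" "c \<in> f \<beta>"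
    by (rule deficient_edge_obtain)
  obtain a where a: "f \<beta> = {a, c}" "a \<noteq> c" "a \<in> f e"
      "count (edges_prod f A) a = 1" "count (edges_prod f B) a = 1"
    by (rule stuck_deficient_partner[OF c \<beta>])
  have "card (f e) = 2"
    using two_elem e_in_A by simp
  then obtain y where "f e = {y, a}" "y \<noteq> a"
    using a(3) by (rule card_2_obtain)
  then have e: "f e = {a, y}" "y \<noteq> a"
    by (simp_all add: insert_commute)
  consider (same) "c = y"
    | (surplus) "c \<noteq> y" "count (edges_prod f B) y < count (edges_prod f A) y"
    | (deficient) "c \<noteq> y" "deficient f A B y"
    | (balanced) "c \<noteq> y" "count (edges_prod f A) y = count (edges_prod f B) y"
    by linarith
  then show ?thesis
  proof cases
    case same
    then show ?thesis
      using improving_exchange_single[OF e_in_A \<beta>(1), of f] a(1) e(1) by (auto simp: insert_commute)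
  next
    case surplus
    have "mset_set (f e) - mset_set (f \<beta>) = {#y#}"
      using a e surplus by (auto simp: multiset_eq_iff count_mset_set')
    then show ?thesis
      using improving_exchange_single[OF e_in_A \<beta>(1), of f] surplus(2) by (auto simp: in_diff_count)
  next
    case deficient
    then show ?thesis
      using stuck_partner_not_deficient[OF \<beta>(1) a(1) a(5) e] by simp
  next
    case balanced
    then show ?thesis
      using stuck_balanced_exchange[OF sz deficit \<beta>(1) a(1,2) c a(5) e] by simp
  qed
qed

end

lemma improving_exchange_exists:
  assumes "size A = size B" "e \<in># A" "\<forall>i\<in>#A + B. card (f i) = 2"
  shows "\<exists>A1 B1. improving_exchange f e A B A1 B1"
  using assms
proof (induction "size A" arbitrary: A B rule: less_induct)
  case less
  have fin: "finite (f i)" if "i \<in># A + B" for i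
    using less.prems(3) that by (intro card_ge_0_finite) auto
  consider (small) "size (edges_prod f A - edges_prod f B) \<le> 1"
    | (drop) \<beta> where "\<beta> \<in># B" "\<forall>v\<in>f \<beta>. deficient f A B v"
    | (shrink) \<alpha> \<beta> v where "\<alpha> \<in># A - {#e#}" "\<beta> \<in># B" "v \<in> f \<alpha>" "v \<in> f \<beta>"
        "\<forall>w\<in>f \<beta>. w \<noteq> v \<longrightarrow> deficient f A B w"
    | (stuck) "\<not> size (edges_prod f A - edges_prod f B) \<le> 1"
        "\<forall>\<beta>\<in>#B. \<exists>v\<in>f \<beta>. \<not> deficient f A B v"
        "\<forall>\<alpha>\<in>#A - {#e#}. \<forall>\<beta>\<in>#B. \<forall>v\<in>f \<alpha> \<inter> f \<beta>. \<exists>w\<in>f \<beta>. w \<noteq> v \<and> \<not> deficient f A B w"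
    by blast
  then show ?case
  proof cases
    case small
    then have "improving_exchange f e A B A B"
      using less.prems(1,2) by (simp add: improving_exchange_def)
    then show ?thesis by blast
  next
    case (drop \<beta>)
    have "finite (f \<beta>)"
      using fin drop(1) by simp
    then have "improving_exchange f e A B A (B - {#\<beta>#})"
      by (rule improving_exchange_drop_deficient[OF less.prems(1) drop(1) _ drop(2)])
    then show ?thesis by blast
  next
    case (shrink \<alpha> \<beta> v)
    have \<alpha>: "\<alpha> \<in># A"
      using shrink(1) by (rule in_diffD)
    have "size (A - {#\<alpha>#}) < size A"
      using \<alpha> by (rule size_Diff1_less)
    moreover have "size (A - {#\<alpha>#}) = size (B - {#\<beta>#})"
      using \<alpha> shrink(2) less.prems(1) by (simp add: size_Diff_singleton)
    moreover have "e \<in># A - {#\<alpha>#}"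
      using shrink(1) less.prems(2) by (auto simp: in_diff_count split: if_splits)
    moreover have "\<forall>i\<in>#A - {#\<alpha>#} + (B - {#\<beta>#}). card (f i) = 2"
      using less.prems(3) by (auto dest: in_diffD)
    ultimately obtain A1 B1 where "improving_exchange f e (A - {#\<alpha>#}) (B - {#\<beta>#}) A1 B1"
      using less.hyps by blast
    moreover have "finite (f \<alpha>)" "finite (f \<beta>)"
      using fin \<alpha> shrink(2) by simp_all
    ultimately have "improving_exchange f e A B A1 B1"
      using improving_exchange_shrink[OF \<alpha> shrink(2) _ _ shrink(3-5)] by blast
    then show ?thesis by blast
  next
    case stuck
    show ?thesis
      using stuck_improving_exchange[OF less.prems(3,2) stuck(2,3) less.prems(1) stuck(1)] .
  qed
qed

section \<open>Exponent vectors and maximal expressions\<close>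

definition index_mset :: "nat list \<Rightarrow> nat multiset" where
  "index_mset a = (\<Sum>i<length a. replicate_mset (a ! i) i)"

definition exponent_vector :: "nat \<Rightarrow> nat multiset \<Rightarrow> nat list" where
  "exponent_vector k C = map (count C) [0..<k]"

lemma count_index_mset: "count (index_mset a) i = (if i < length a then a ! i else 0)"
  unfolding index_mset_def count_sum by (simp add: count_replicate_mset)

lemma set_index_mset: "set_mset (index_mset a) \<subseteq> {..<length a}"
  using count_index_mset by (metis count_eq_zero_iff lessThan_iff subsetI)

lemma size_index_mset: "size (index_mset a) = sum_list a"
proof -
  have "size (index_mset a) = (\<Sum>i<length a. a ! i)"
    unfolding index_mset_def by (induction "length a") (simp_all add: size_multiset_sum)
  then show ?thesis
    by (simp add: sum_list_sum_nth atLeast0LessThan)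
qed

lemma length_exponent_vector [simp]: "length (exponent_vector k C) = k"
  by (simp add: exponent_vector_def)

lemma nth_exponent_vector [simp]: "i < k \<Longrightarrow> exponent_vector k C ! i = count C i"
  by (simp add: exponent_vector_def)

lemma index_mset_exponent_vector:
  "set_mset C \<subseteq> {..<k} \<Longrightarrow> index_mset (exponent_vector k C) = C"
  by (auto simp: multiset_eq_iff count_index_mset count_eq_zero_iff subset_iff)

lemma exponent_vector_index_mset: "exponent_vector (length a) (index_mset a) = a"
  by (rule nth_equalityI) (simp_all add: count_index_mset)

lemma edges_prod_sum: "edges_prod f (sum g I) = (\<Sum>i\<in>I. edges_prod f (g i))"
  by (induction I rule: infinite_finite_induct) auto

lemma edges_prod_replicate: "edges_prod f (replicate_mset m i) = repeat_mset m (mset_set (f i))"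
  by (induction m) auto

lemma expr_prod_eq_sum:
  "length a = length Ls \<Longrightarrow> expr_prod Ls a = (\<Sum>i<length a. repeat_mset (a ! i) (mset_set (Ls ! i)))"
proof (induction a arbitrary: Ls)
  case (Cons x a)
  then obtain e Ls' where Ls: "Ls = e # Ls'" "length a = length Ls'"
    by (cases Ls) auto
  have "expr_prod Ls (x # a) = repeat_mset x (mset_set e) + expr_prod Ls' a"
    by (simp add: expr_prod_def Ls edge_mono_def)
  then show ?case
    using Cons.IH[OF Ls(2)] unfolding Ls(1) length_Cons sum.lessThan_Suc_shift by simp
qed (simp add: expr_prod_def)

lemma expr_prod_eq_edges_prod:
  "length a = length Ls \<Longrightarrow> expr_prod Ls a = edges_prod (nth Ls) (index_mset a)"
  by (simp add: expr_prod_eq_sum index_mset_def edges_prod_sum edges_prod_replicate)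

lemma exponent_vector_expression:
  assumes "set_mset C \<subseteq> {..<length Ls}"
  shows "exponent_vector (length Ls) C \<in> expressions Ls (size C)"
    and "expr_prod Ls (exponent_vector (length Ls) C) = edges_prod (nth Ls) C"
proof -
  have "index_mset (exponent_vector (length Ls) C) = C"
    using assms by (rule index_mset_exponent_vector)
  then show "exponent_vector (length Ls) C \<in> expressions Ls (size C)"
      "expr_prod Ls (exponent_vector (length Ls) C) = edges_prod (nth Ls) C"
    using size_index_mset[of "exponent_vector (length Ls) C"] expr_prod_eq_edges_prod[of _ Ls]
    by (simp_all add: expressions_def)
qed

lemma edges_prod_in_pow_prods:
  "set_mset C \<subseteq> {..<length Ls} \<Longrightarrow> edges_prod (nth Ls) C \<in> pow_prods Ls (size C)"
  unfolding pow_prods_def using exponent_vector_expression by (metis image_eqI)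

lemma index_mset_first_difference:
  assumes "lex_gt b a"
  obtains t where "t \<in># index_mset b - index_mset a"
    and "\<forall>s\<in>#(index_mset b - index_mset a) + (index_mset a - index_mset b). t \<le> s"
proof -
  obtain t where t: "t < length b" "take t b = take t a" "a ! t < b ! t" "length b = length a"
    using assms by (auto simp: lex_gt_def)
  have eq: "count (index_mset b) s = count (index_mset a) s" if "s < t" for s
    using that t by (metis count_index_mset nth_take)
  have "t \<le> s" if "s \<in># (index_mset b - index_mset a) + (index_mset a - index_mset b)" for s
  proof (rule ccontr)
    assume "\<not> t \<le> s"
    then show False
      using that eq[of s] by (simp add: in_diff_count)
  qed
  moreover have "t \<in># index_mset b - index_mset a"
    using t by (simp add: in_diff_count count_index_mset)
  ultimately show thesis
    using that by blast
qed

lemma exponent_vector_exchange_greater: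
  assumes "B1 \<subseteq># B" "set_mset A1 \<subseteq> {..<k}" "t \<in># A1" "t \<notin># B1" "\<forall>s\<in>#A1 + B1. t \<le> s"
  shows "exponent_vector k B < exponent_vector k (B - B1 + A1)"
proof (rule list_less_nthI)
  show "t < length (exponent_vector k B)"
    using assms(2,3) by auto
  show "\<forall>j<t. exponent_vector k B ! j = exponent_vector k (B - B1 + A1) ! j"
  proof (intro allI impI)
    fix j
    assume "j < t"
    then have "j \<notin># A1" "j \<notin># B1"
      using assms(5) by (auto simp: not_le[symmetric])
    then show "exponent_vector k B ! j = exponent_vector k (B - B1 + A1) ! j"
      using \<open>j < t\<close> \<open>t < length (exponent_vector k B)\<close> by (simp add: not_in_iff)
  qed
  show "exponent_vector k B ! t < exponent_vector k (B - B1 + A1) ! t"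
    using assms(3,4) \<open>t < length (exponent_vector k B)\<close> by (simp add: not_in_iff)
qed simp

lemma exchange_longer_or_lex_greater:
  assumes "B1 \<subseteq># B" "set_mset A1 \<subseteq> {..<k}" "t \<notin># B1" "\<forall>s\<in>#A1 + B1. t \<le> s"
  shows "size B1 < size A1 \<Longrightarrow> Suc (size B) \<le> size (B - B1 + A1)"
    and "size A1 = size B1 \<Longrightarrow> t \<in># A1 \<Longrightarrow>
      size (B - B1 + A1) = size B \<and> exponent_vector k B < exponent_vector k (B - B1 + A1)"
proof -
  have "size (B - B1 + A1) = size B - size B1 + size A1" "size B1 \<le> size B"
    using size_Diff_submset[OF assms(1)] size_mset_mono[OF assms(1)] by simp_all
  then show "size B1 < size A1 \<Longrightarrow> Suc (size B) \<le> size (B - B1 + A1)"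
    and "size A1 = size B1 \<Longrightarrow> t \<in># A1 \<Longrightarrow>
      size (B - B1 + A1) = size B \<and> exponent_vector k B < exponent_vector k (B - B1 + A1)"
    using exponent_vector_exchange_greater[OF assms(1,2) _ assms(3,4)] by simp_all
qed

lemma lex_gt_iff_less: "lex_gt a b \<longleftrightarrow> length a = length b \<and> b < a"
  by (auto simp: lex_gt_def list_less_def lexord_take_index_conv)

lemma finite_expressions: "finite (expressions Ls n)"
proof -
  have "expressions Ls n \<subseteq> {xs. set xs \<subseteq> {..n} \<and> length xs = length Ls}"
    unfolding expressions_def using member_le_sum_list by fastforce
  then show ?thesis
    using finite_lists_length_eq[of "{..n}"] finite_subset by blast
qed

lemma finite_pow_prods: "finite (pow_prods Ls n)"
  unfolding pow_prods_def by (rule finite_imageI[OF finite_expressions])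

lemma max_expr_eq_Max:
  assumes "M \<in> pow_prods Ls n"
  shows "max_expr Ls n M = Max {a \<in> expressions Ls n. expr_prod Ls a = M}"
proof -
  let ?X = "{a \<in> expressions Ls n. expr_prod Ls a = M}"
  have fin: "finite ?X" and ne: "?X \<noteq> {}"
    using finite_expressions[of Ls n] assms by (auto simp: pow_prods_def)
  have Max: "Max ?X \<in> ?X" "\<And>b. b \<in> ?X \<Longrightarrow> b \<le> Max ?X"
    using Max_in[OF fin ne] Max_ge[OF fin] by simp_all
  have lex: "lex_gt a b \<longleftrightarrow> b < a" if "a \<in> ?X" "b \<in> ?X" for a b
    using that by (simp add: lex_gt_iff_less expressions_def)
  show ?thesis
    unfolding max_expr_def
  proof (rule the_equality)
    show "Max ?X \<in> expressions Ls n \<and> expr_prod Ls (Max ?X) = M \<and>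
        (\<forall>b\<in>expressions Ls n. expr_prod Ls b = M \<longrightarrow> b \<noteq> Max ?X \<longrightarrow> lex_gt (Max ?X) b)"
      using Max lex by (auto simp: order.order_iff_strict)
  next
    fix a
    assume "a \<in> expressions Ls n \<and> expr_prod Ls a = M \<and>
        (\<forall>b\<in>expressions Ls n. expr_prod Ls b = M \<longrightarrow> b \<noteq> a \<longrightarrow> lex_gt a b)"
    then have a: "a \<in> ?X" and gt: "\<And>b. b \<in> ?X \<Longrightarrow> b \<noteq> a \<Longrightarrow> b < a"
      using lex by auto
    show "a = Max ?X"
    proof (rule ccontr)
      assume "a \<noteq> Max ?X"
      then have "Max ?X < a"
        using gt Max(1) by simp
      then show False
        using Max(2)[OF a] by simp
    qed
  qed
qed

lemma max_expr_spec:
  assumes "M \<in> pow_prods Ls n"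
  shows "max_expr Ls n M \<in> expressions Ls n" "expr_prod Ls (max_expr Ls n M) = M"
    and "\<And>a. a \<in> expressions Ls n \<Longrightarrow> expr_prod Ls a = M \<Longrightarrow> a \<le> max_expr Ls n M"
proof -
  let ?X = "{a \<in> expressions Ls n. expr_prod Ls a = M}"
  have "finite ?X" "?X \<noteq> {}"
    using finite_expressions[of Ls n] assms by (auto simp: pow_prods_def)
  then show "max_expr Ls n M \<in> expressions Ls n" "expr_prod Ls (max_expr Ls n M) = M"
      "\<And>a. a \<in> expressions Ls n \<Longrightarrow> expr_prod Ls a = M \<Longrightarrow> a \<le> max_expr Ls n M"
    using Max_in[of ?X] unfolding max_expr_eq_Max[OF assms] by auto
qed

lemma max_expr_index_mset:
  assumes "M \<in> pow_prods Ls n"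
  shows "M = edges_prod (nth Ls) (index_mset (max_expr Ls n M))"
    and "set_mset (index_mset (max_expr Ls n M)) \<subseteq> {..<length Ls}"
    and "size (index_mset (max_expr Ls n M)) = n"
    and "exponent_vector (length Ls) (index_mset (max_expr Ls n M)) = max_expr Ls n M"
proof -
  have a: "length (max_expr Ls n M) = length Ls" "sum_list (max_expr Ls n M) = n"
    using max_expr_spec(1)[OF assms] by (simp_all add: expressions_def)
  show "M = edges_prod (nth Ls) (index_mset (max_expr Ls n M))"
    using max_expr_spec(2)[OF assms] expr_prod_eq_edges_prod[OF a(1)] by simp
  show "set_mset (index_mset (max_expr Ls n M)) \<subseteq> {..<length Ls}"
    using set_index_mset[of "max_expr Ls n M"] a(1) by simp
  show "size (index_mset (max_expr Ls n M)) = n"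
    using size_index_mset[of "max_expr Ls n M"] a(2) by simp
  show "exponent_vector (length Ls) (index_mset (max_expr Ls n M)) = max_expr Ls n M"
    using exponent_vector_index_mset[of "max_expr Ls n M"] a(1) by simp
qed

lemma gen_gt_iff:
  "M \<in> pow_prods Ls n \<Longrightarrow> N \<in> pow_prods Ls n \<Longrightarrow> gen_gt Ls n M N \<longleftrightarrow> max_expr Ls n N < max_expr Ls n M"
  using max_expr_spec(1)[of M Ls n] max_expr_spec(1)[of N Ls n]
  by (simp add: gen_gt_def lex_gt_iff_less expressions_def)

lemma gen_gt_asym: "gen_gt Ls n M N \<Longrightarrow> \<not> gen_gt Ls n N M"
  by (auto simp: gen_gt_def lex_gt_iff_less)

lemma gen_gt_expr_prod:
  assumes "M \<in> pow_prods Ls n" "c \<in> expressions Ls n" "max_expr Ls n M < c"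
  shows "gen_gt Ls n (expr_prod Ls c) M"
proof -
  have N: "expr_prod Ls c \<in> pow_prods Ls n"
    using assms(2) by (simp add: pow_prods_def)
  have "c \<le> max_expr Ls n (expr_prod Ls c)"
    using max_expr_spec(3)[OF N assms(2)] by simp
  then show ?thesis
    using assms(3) gen_gt_iff[OF N assms(1)] by simp
qed

lemma gens_list_spec:
  "distinct (gens_list Ls n) \<and> set (gens_list Ls n) = min_gens Ls n \<and>
     sorted_wrt (gen_gt Ls n) (gens_list Ls n)"
proof -
  let ?S = "min_gens Ls n" and ?g = "max_expr Ls n"
  have S: "M \<in> pow_prods Ls n" if "M \<in> ?S" for M
    using that by (simp add: min_gens_def)
  have "finite ?S"
    by (rule finite_subset[OF _ finite_pow_prods]) (use S in blast)
  moreover have "inj_on ?g ?S"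
  proof (rule inj_onI)
    fix M N
    assume "M \<in> ?S" "N \<in> ?S" "?g M = ?g N"
    then show "M = N"
      using max_expr_spec(2)[OF S] by metis
  qed
  ultimately have ex1: "\<exists>!xs. distinct xs \<and> set xs = ?S \<and> sorted_wrt (\<lambda>x y. ?g y < ?g x) xs"
    by (rule sorted_wrt_key_ex1)
  have "sorted_wrt (gen_gt Ls n) xs \<longleftrightarrow> sorted_wrt (\<lambda>x y. ?g y < ?g x) xs" if xs: "set xs = ?S" for xs
  proof
    assume "sorted_wrt (gen_gt Ls n) xs"
    then show "sorted_wrt (\<lambda>x y. ?g y < ?g x) xs"
      by (rule sorted_wrt_mono_rel[rotated]) (use xs gen_gt_iff[OF S S] in auto)
  next
    assume "sorted_wrt (\<lambda>x y. ?g y < ?g x) xs"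
    then show "sorted_wrt (gen_gt Ls n) xs"
      by (rule sorted_wrt_mono_rel[rotated]) (use xs gen_gt_iff[OF S S] in auto)
  qed
  then have "(\<lambda>xs. distinct xs \<and> set xs = ?S \<and> sorted_wrt (gen_gt Ls n) xs) =
      (\<lambda>xs. distinct xs \<and> set xs = ?S \<and> sorted_wrt (\<lambda>x y. ?g y < ?g x) xs)"
    by (intro ext) blast
  then have "\<exists>!xs. distinct xs \<and> set xs = ?S \<and> sorted_wrt (gen_gt Ls n) xs"
    using ex1 by simp
  then show ?thesis
    unfolding gens_list_def by (rule theI')
qed

lemma size_pow_prods:
  assumes "\<forall>e\<in>set Ls. card e = 2" "M \<in> pow_prods Ls n"
  shows "size M = 2 * n"
proof -
  obtain a where a: "length a = length Ls" "sum_list a = n" "M = expr_prod Ls a"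
    using assms(2) by (auto simp: pow_prods_def expressions_def)
  have "\<forall>i\<in>#index_mset a. card (Ls ! i) = 2"
    using set_index_mset[of a] a(1) assms(1) by auto
  then have "size (edges_prod (nth Ls) (index_mset a)) = 2 * size (index_mset a)"
    by (rule size_edges_prod)
  then show ?thesis
    using a size_index_mset[of a] by (simp add: expr_prod_eq_edges_prod)
qed

lemma min_gens_eq_pow_prods:
  assumes "\<forall>e\<in>set Ls. card e = 2"
  shows "min_gens Ls n = pow_prods Ls n"
proof -
  have "N = M" if "M \<in> pow_prods Ls n" "N \<in> pow_prods Ls n" "N \<subseteq># M" for M N
  proof -
    have "size (M - N) = 0"
      using that size_pow_prods[OF assms] by (simp add: size_Diff_submset)
    then have "M - N = {#}"
      by simp
    then show ?thesis
      using subset_mset.diff_add[OF that(3)] by simp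
  qed
  then show ?thesis
    unfolding min_gens_def by auto
qed

lemma pow_prods_over:
  assumes "\<forall>e\<in>set Ls. e \<subseteq> V" "P \<in> pow_prods Ls n"
  shows "set_mset P \<subseteq> V"
proof -
  obtain a where a: "length a = length Ls" "P = expr_prod Ls a"
    using assms(2) by (auto simp: pow_prods_def expressions_def)
  have "set_mset P \<subseteq> \<Union> (nth Ls ` set_mset (index_mset a))"
    using a set_edges_prod by (simp add: expr_prod_eq_edges_prod)
  also have "\<dots> \<subseteq> V"
  proof (rule UN_least)
    fix i
    assume "i \<in> set_mset (index_mset a)"
    then have "i < length Ls"
      using set_index_mset[of a] a(1) by auto
    then show "Ls ! i \<subseteq> V"
      using assms(1) by simp
  qed
  finally show ?thesis .
qed

lemma pow_prods_below_edges_prod: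
  assumes "set_mset C \<subseteq> {..<length Ls}" "Suc n \<le> size C"
  shows "\<exists>P\<in>pow_prods Ls (Suc n). P \<subseteq># edges_prod (nth Ls) C"
proof -
  obtain C' where C': "C' \<subseteq># C" "size C' = Suc n"
    using assms(2) by (rule submset_of_size)
  then have "set_mset C' \<subseteq> {..<length Ls}"
    using assms(1) set_mset_mono by blast
  then have "edges_prod (nth Ls) C' \<in> pow_prods Ls (Suc n)"
    using edges_prod_in_pow_prods[of C' Ls] C'(2) by simp
  moreover have "edges_prod (nth Ls) C' \<subseteq># edges_prod (nth Ls) C"
    using C'(1) by (rule edges_prod_mono)
  ultimately show ?thesis
    by blast
qed

section \<open>Colon ideals of consecutive generators\<close>

lemma gen_gt_exchange_witness:
  assumes edges: "\<forall>e\<in>set Ls. card e = 2"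
    and M: "M \<in> pow_prods Ls n" and N: "N \<in> pow_prods Ls n" and gt: "gen_gt Ls n N M"
  obtains C where "set_mset C \<subseteq> {..<length Ls}" "edges_prod (nth Ls) C - M \<subseteq># N - M"
    and "Suc n \<le> size C \<or> size C = n \<and> max_expr Ls n M < exponent_vector (length Ls) C \<and>
           size (edges_prod (nth Ls) C - M) \<le> 1"
proof -
  let ?f = "nth Ls" and ?k = "length Ls"
  define A B where "A = index_mset (max_expr Ls n N)" and "B = index_mset (max_expr Ls n M)"
  note NA = max_expr_index_mset[OF N, folded A_def]
  note MB = max_expr_index_mset[OF M, folded B_def]
  obtain t where tA: "t \<in># A - B" and low: "\<forall>s\<in>#(A - B) + (B - A). t \<le> s"
    using gt index_mset_first_difference unfolding gen_gt_def A_def B_def by blast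
  have "size (A - B) = size (B - A)"
    using NA(3) MB(3) size_diff_swap[of A B] by simp
  moreover have "\<forall>i\<in>#(A - B) + (B - A). card (?f i) = 2"
    using NA(2) MB(2) edges by (auto dest!: in_diffD)
  ultimately obtain A1 B1 where "improving_exchange ?f t (A - B) (B - A) A1 B1"
    using improving_exchange_exists[OF _ tA] by blast
  then have A1: "A1 \<subseteq># A - B" and B1: "B1 \<subseteq># B - A"
    and diff: "edges_prod ?f A1 - edges_prod ?f B1 \<subseteq># N - M"
    and cases: "size B1 < size A1 \<or> size A1 = size B1 \<and> t \<in># A1 \<and> size (edges_prod ?f A1 - edges_prod ?f B1) \<le> 1"
    unfolding improving_exchange_def NA(1) MB(1) by (simp_all add: edges_prod_diff_cancel[of ?f A B])
  have B1_B: "B1 \<subseteq># B" and A1_A: "A1 \<subseteq># A"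
    using A1 B1 by (meson diff_subset_eq_self subset_mset.order_trans)+
  define C where "C = B - B1 + A1"
  have "edges_prod ?f B1 \<subseteq># M"
    unfolding MB(1) using B1_B by (rule edges_prod_mono)
  moreover have "edges_prod ?f C = M - edges_prod ?f B1 + edges_prod ?f A1"
    unfolding C_def MB(1) using edges_prod_diff[OF B1_B] by simp
  ultimately have C_M: "edges_prod ?f C - M = edges_prod ?f A1 - edges_prod ?f B1"
    by (simp add: multiset_eq_iff subseteq_mset_def)
  have set_A1: "set_mset A1 \<subseteq> {..<?k}"
    using NA(2) set_mset_mono[OF A1_A] by blast
  then have "set_mset C \<subseteq> {..<?k}"
    unfolding C_def using MB(2) by (auto dest: in_diffD)
  moreover have "edges_prod ?f C - M \<subseteq># N - M"
    using C_M diff by simp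
  moreover have "t \<notin># B1" "\<forall>s\<in>#A1 + B1. t \<le> s"
    using tA low A1 B1 by (auto simp: in_diff_count dest: mset_subset_eqD)
  note exchange = exchange_longer_or_lex_greater[OF B1_B set_A1 this, folded C_def]
  have "Suc n \<le> size C \<or> size C = n \<and> max_expr Ls n M < exponent_vector ?k C \<and>
      size (edges_prod ?f C - M) \<le> 1"
    using cases exchange MB(3,4) C_M by auto
  ultimately show thesis
    by (rule that)
qed

lemma gen_gt_dichotomy:
  assumes edges: "\<forall>e\<in>set Ls. card e = 2"
    and M: "M \<in> pow_prods Ls n" and N: "N \<in> pow_prods Ls n" and gt: "gen_gt Ls n N M"
  shows "(\<exists>P\<in>pow_prods Ls (Suc n). P \<subseteq># N - M + M) \<or>
    (\<exists>N'\<in>pow_prods Ls n. gen_gt Ls n N' M \<and> (\<exists>x. N' - M = {#x#} \<and> x \<in># N - M))"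
proof -
  obtain C where C: "set_mset C \<subseteq> {..<length Ls}" "edges_prod (nth Ls) C - M \<subseteq># N - M"
    and cases: "Suc n \<le> size C \<or> size C = n \<and> max_expr Ls n M < exponent_vector (length Ls) C \<and>
           size (edges_prod (nth Ls) C - M) \<le> 1"
    by (rule gen_gt_exchange_witness[OF assms])
  let ?N' = "edges_prod (nth Ls) C"
  from cases show ?thesis
  proof
    assume "Suc n \<le> size C"
    then obtain P where P: "P \<in> pow_prods Ls (Suc n)" "P \<subseteq># ?N'"
      using pow_prods_below_edges_prod[OF C(1)] by blast
    have "?N' \<subseteq># ?N' - M + M"
      by (rule mset_subset_eqI) simp
    also have "\<dots> \<subseteq># N - M + M"
      using C(2) by simp
    finally show ?thesis
      using P by (blast intro: subset_mset.order_trans)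
  next
    assume eq: "size C = n \<and> max_expr Ls n M < exponent_vector (length Ls) C \<and> size (?N' - M) \<le> 1"
    have N': "?N' \<in> pow_prods Ls n"
      using edges_prod_in_pow_prods[OF C(1)] eq by simp
    have gt': "gen_gt Ls n ?N' M"
      using gen_gt_expr_prod[OF M, of "exponent_vector (length Ls) C"] eq
        exponent_vector_expression[OF C(1)] by simp
    then have "?N' \<noteq> M"
      using gen_gt_asym by blast
    moreover have "size ?N' = size M"
      using size_pow_prods[OF edges] N' M by simp
    ultimately obtain x where x: "?N' - M = {#x#}"
      using eq diff_eq_single_mset by metis
    then have "x \<in># N - M"
      using C(2) by simp
    then show ?thesis
      using N' gt' x by blast
  qed
qed

lemma mono_colon_eq: "mono_colon V m m' = {u \<in> monomials_over V. m - m' \<subseteq># u}"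
  by (simp add: mono_colon_def subset_eq_diff_conv)

lemma mono_colon_single:
  assumes "N' - M = {#x#}"
  shows "mono_colon V N' M = mideal V {{#x#}}"
  using assms by (auto simp: mono_colon_eq mideal_def)

lemma mono_colon_subset_single:
  assumes "N' - M = {#x#}" "x \<in># N - M"
  shows "mono_colon V N M \<subseteq> mono_colon V N' M"
  using assms by (auto simp: mono_colon_eq dest: mset_subset_eqD)

lemma mono_colon_subset_ideal_colon:
  assumes "set_mset M \<subseteq> V" "P \<in> pow_prods Ls m" "P \<subseteq># N - M + M"
  shows "mono_colon V N M \<subseteq> ideal_colon V (edge_ideal_pow V Ls m) M"
proof
  fix u
  assume "u \<in> mono_colon V N M"
  then have u: "u \<in> monomials_over V" "N - M \<subseteq># u"
    by (simp_all add: mono_colon_eq)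
  then have "P \<subseteq># u + M"
    using assms(3) by (meson subset_mset.add_right_mono subset_mset.order_trans)
  moreover have "u + M \<in> monomials_over V"
    using u(1) assms(1) by (auto simp: monomials_over_def)
  ultimately show "u \<in> ideal_colon V (edge_ideal_pow V Ls m) M"
    using u(1) assms(2) by (auto simp: ideal_colon_def edge_ideal_pow_def mideal_def)
qed

theorem theorem4p12:
  fixes V :: "'a set" and E :: "'a set set" and Ls :: "'a set list"
    and n k' j :: nat
  assumes "simple_graph V E"
    and "distinct Ls" and "set Ls = E"
    and "n \<ge> 1" and "k' \<ge> 1" and "1 \<le> j" and "j \<le> k'"
    and "k' + 1 \<le> length (gens_list Ls n)"
    and "\<not> mono_colon V (Lgen Ls n j) (Lgen Ls n (k' + 1))
            \<subseteq> ideal_colon V (edge_ideal_pow V Ls (n + 1)) (Lgen Ls n (k' + 1))"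
  shows "\<exists>i. 1 \<le> i \<and> i \<le> k' \<and>
           (\<exists>x\<in>V. mono_colon V (Lgen Ls n i) (Lgen Ls n (k' + 1)) = mideal V {{#x#}}) \<and>
           mono_colon V (Lgen Ls n j) (Lgen Ls n (k' + 1))
             \<subseteq> mono_colon V (Lgen Ls n i) (Lgen Ls n (k' + 1))"
proof -
  have edges: "\<forall>e\<in>set Ls. card e = 2" and edges_V: "\<forall>e\<in>set Ls. e \<subseteq> V"
    using assms(1,3) by (auto simp: simple_graph_def)
  let ?L = "gens_list Ls n"
  have L: "set ?L = pow_prods Ls n" "sorted_wrt (gen_gt Ls n) ?L"
    using gens_list_spec[of Ls n] min_gens_eq_pow_prods[OF edges] by simp_all
  define M N where "M = Lgen Ls n (k' + 1)" and "N = Lgen Ls n j"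
  have k': "k' < length ?L" and j: "j - 1 < k'"
    using assms(6-8) by simp_all
  then have M: "M \<in> pow_prods Ls n" and N: "N \<in> pow_prods Ls n" and gt: "gen_gt Ls n N M"
    using L nth_mem[OF k'] nth_mem[of "j - 1" ?L] sorted_wrt_nth_less[OF L(2) j k']
    by (simp_all add: M_def N_def)
  have "\<not> P \<subseteq># N - M + M" if "P \<in> pow_prods Ls (n + 1)" for P
    using assms(9) mono_colon_subset_ideal_colon[OF pow_prods_over[OF edges_V M] that]
    by (auto simp: M_def N_def)
  then obtain N' x where N': "N' \<in> pow_prods Ls n" "gen_gt Ls n N' M"
    and x: "N' - M = {#x#}" "x \<in># N - M"
    using gen_gt_dichotomy[OF edges M N gt] by auto
  obtain i where i: "i < length ?L" "?L ! i = N'"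
    using N'(1) L(1) by (metis in_set_conv_nth)
  then have "i < k'"
    using sorted_wrt_index_less[OF L(2) gen_gt_asym _ k'] N'(2) by (simp add: M_def)
  moreover have "x \<in> V"
    using x(2) pow_prods_over[OF edges_V N] by (auto dest: in_diffD)
  ultimately show ?thesis
    using i(2) mono_colon_single[OF x(1)] mono_colon_subset_single[OF x]
    by (intro exI[of _ "Suc i"]) (auto simp: M_def N_def)
qed

end
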